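(* For $p\in(0,1]$ define on $(0,1)$ $$w(x)=x^{p}+p(p-1)x-(p^{2}+2p-2)-p(p+1)x^{1-p}+(p-1)^{2}x^{-p}.$$ Then: (i) if $p\in(0,2/3]$, $w(x)>0$ for all $x\in(0,1)$; (ii) if $p\in(2/3,1)$, there is a unique $x_1\in(0,1)$ such that $w>0$ on $(0,x_1)$ and $w<0$ on $(x_1,1)$; (iii) if $p=1$, $w(x)<0$ for all $x\in(0,1)$. *)

theory Defs
  imports Complex_Main
begin

definition w :: "real \<Rightarrow> real \<Rightarrow> real" where
  "w p x = x powr p + p * (p - 1) * x - (p^2 + 2*p - 2) - p * (p + 1) * x powr (1 - p)
           + (p - 1)^2 * x powr (-p)"

end

theory Submission
  imports Defs "HOL-Analysis.Convex"
begin

(* Differentiating gives w'(x) = p x^(p-1) k(x) with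
     k(x) = 1 - (1-p) x^(1-p) - (1-p^2) x^(1-2p) - (1-p)^2 x^(-2p),
   so the sign of w' on (0,1) is the sign of k.  Moreover
     k'(x) = (1-p) x^(-2p-1) g(x),  g(x) = -(1-p) x^(p+1) + (1+p)(2p-1) x + 2p(1-p),
   and g > 0 on (0,1] when 1/2 < p < 1, so k is strictly increasing there; for
   p <= 1/2 a Young-inequality estimate gives k < 0 on (0,1] directly.  With
   k(1) = 3p - 2 and w(1) = 4 - 6p this yields:
   (i)  p <= 2/3: k < 0 on (0,1), so w decreases to w(1) >= 0;
   (ii) 2/3 < p < 1: k has a unique zero c, w decreases on (0,c] and increases
        on [c,1] with w(1) < 0; since w is large near 0, w has a unique zero
        x1 < c, positive before and negative after it;
   (iii) p = 1: w(x) = x - 3.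
   The file first establishes the derivative formulas, then the monotonicity of
   w and k, the sign information on k, and finally the three cases. *)

text \<open>The factor of the derivative of w which determines its sign.\<close>
definition k :: "real \<Rightarrow> real \<Rightarrow> real" where
  "k p x = 1 - (1-p) * x powr (1-p) - (1-p^2) * x powr (1-2*p) - (1-p)^2 * x powr (-2*p)"

text \<open>The factor of the derivative of k which determines its sign.\<close>
definition g :: "real \<Rightarrow> real \<Rightarrow> real" where
  "g p x = -(1-p) * x powr (p+1) + (1+p) * (2*p-1) * x + 2*p*(1-p)"

lemma w_deriv:
  assumes "0 < x"
  shows "DERIV (w p) x :> p * x powr (p-1) * k p x"
proof -
  have d: "DERIV (w p) x :> p * x powr (p-1) + p*(p-1) - p*(p+1)*((1-p)*x powr (1-p-1))
                            + (p-1)^2*((-p)*x powr (-p-1))"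
    unfolding w_def[abs_def] using assms by (auto intro!: derivative_eq_intros)
  have e1: "x powr (p-1) * x powr (1-p) = 1"
    and e2: "x powr (p-1) * x powr (1-2*p) = x powr (-p)"
    and e3: "x powr (p-1) * x powr (-2*p) = x powr (-p-1)"
    using assms by (simp_all add: powr_add[symmetric])
  have "p * x powr (p-1) * k p x = p * x powr (p-1) - p*(1-p)*(x powr (p-1) * x powr (1-p))
      - p*(1-p^2)*(x powr (p-1) * x powr (1-2*p)) - p*(1-p)^2*(x powr (p-1) * x powr (-2*p))"
    unfolding k_def by (simp add: algebra_simps)
  also have "\<dots> = p * x powr (p-1) + p*(p-1) - p*(p+1)*((1-p)*x powr (1-p-1))
                  + (p-1)^2*((-p)*x powr (-p-1))"
    unfolding e1 e2 e3 by (simp add: algebra_simps power2_eq_square)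
  finally show ?thesis using d by simp
qed

lemma k_deriv:
  assumes "0 < x"
  shows "DERIV (k p) x :> (1-p) * x powr (-2*p-1) * g p x"
proof -
  have d: "DERIV (k p) x :> - (1-p)*((1-p)*x powr (1-p-1)) - (1-p^2)*((1-2*p)*x powr (1-2*p-1))
                            - (1-p)^2*((-2*p)*x powr (-2*p-1))"
    unfolding k_def[abs_def] using assms
    by (auto intro!: derivative_eq_intros simp: algebra_simps)
  have e1: "x powr (-2*p-1) * x powr (p+1) = x powr (-p)"
    using assms by (simp add: powr_add[symmetric])
  have e2: "x powr (-2*p-1) * x = x powr (-2*p)"
    using assms powr_add[of x "-2*p-1" 1] by simp
  have "(1-p) * x powr (-2*p-1) * g p x
     = (p-1)*(1-p)*(x powr (-2*p-1) * x powr (p+1)) + (1-p)*(1+p)*(2*p-1)*(x powr (-2*p-1) * x)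
       + 2*p*(1-p)^2*x powr (-2*p-1)"
    unfolding g_def by (simp add: algebra_simps power2_eq_square)
  also have "\<dots> = - (1-p)*((1-p)*x powr (1-p-1)) - (1-p^2)*((1-2*p)*x powr (1-2*p-1))
                  - (1-p)^2*((-2*p)*x powr (-2*p-1))"
    unfolding e1 e2 by (simp add: algebra_simps power2_eq_square)
  finally show ?thesis using d by simp
qed

lemma w_continuous_on: "0 < a \<Longrightarrow> continuous_on {a..b} (w p)"
  by (intro continuous_at_imp_continuous_on ballI DERIV_isCont[OF w_deriv]) auto

lemma k_continuous_on: "0 < a \<Longrightarrow> continuous_on {a..b} (k p)"
  by (intro continuous_at_imp_continuous_on ballI DERIV_isCont[OF k_deriv]) auto

lemma w_decreasing_where_k_negative:
  assumes "0 < a" "a < b" "0 < p" "\<And>x. a < x \<Longrightarrow> x < b \<Longrightarrow> k p x < 0"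
  shows "w p b < w p a"
proof (rule DERIV_neg_imp_decreasing_open[OF assms(2) _ w_continuous_on[OF assms(1)]])
  fix x assume x: "a < x" "x < b"
  then have "p * x powr (p-1) * k p x < 0" using assms by (intro mult_pos_neg) auto
  with w_deriv[of x p] x assms(1) show "\<exists>y. DERIV (w p) x :> y \<and> y < 0" by auto
qed

lemma w_increasing_where_k_positive:
  assumes "0 < a" "a < b" "0 < p" "\<And>x. a < x \<Longrightarrow> x < b \<Longrightarrow> k p x > 0"
  shows "w p a < w p b"
proof (rule DERIV_pos_imp_increasing_open[OF assms(2) _ w_continuous_on[OF assms(1)]])
  fix x assume x: "a < x" "x < b"
  then have "p * x powr (p-1) * k p x > 0" using assms by (intro mult_pos_pos) auto
  with w_deriv[of x p] x assms(1) show "\<exists>y. DERIV (w p) x :> y \<and> y > 0" by auto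
qed

lemma k_at_one: "k p 1 = 3*p - 2"
  unfolding k_def by (simp add: algebra_simps power2_eq_square)

lemma w_at_one: "w p 1 = 4 - 6*p"
  unfolding w_def by (simp add: algebra_simps power2_eq_square)

text \<open>For 1/2 < p < 1 the factor g is positive on (0,1]: use x^(p+1) <= x and
  split the remainder as x(4p-2) + (1-x)(2p-2p^2).\<close>
lemma g_positive:
  assumes "1/2 < p" "p < 1" "0 < x" "x \<le> 1"
  shows "g p x > 0"
proof -
  have "x powr (p+1) = x powr p * x" using assms powr_add[of x p 1] by simp
  also have "\<dots> \<le> x" using assms mult_right_mono[of "x powr p" 1 x] powr_le1[of p x] by auto
  finally have "(1-p) * x powr (p+1) \<le> (1-p) * x" using assms by (intro mult_left_mono) auto
  moreover have "(1+p)*(2*p-1)*x - (1-p)*x + 2*p*(1-p) = x*(4*p-2) + (1-x)*(2*p-2*p^2)"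
    by (simp add: algebra_simps power2_eq_square)
  moreover have "x*(4*p-2) > 0" using assms by auto
  moreover have "(1-x)*(2*p-2*p^2) \<ge> 0"
    using assms by (intro mult_nonneg_nonneg) (auto simp: power2_eq_square)
  ultimately show ?thesis unfolding g_def by linarith
qed

lemma k_strictly_increasing:
  assumes "1/2 < p" "p < 1" "0 < a" "a < b" "b \<le> 1"
  shows "k p a < k p b"
proof (rule DERIV_pos_imp_increasing[OF assms(4)])
  fix x assume "a \<le> x" "x \<le> b"
  then have x: "0 < x" "x \<le> 1" using assms by auto
  have "(1-p) * x powr (-2*p-1) * g p x > 0"
    using g_positive[OF assms(1,2) x] assms x by (intro mult_pos_pos) auto
  then show "\<exists>y. DERIV (k p) x :> y \<and> y > 0" using k_deriv x by blast
qed

text \<open>For p <= 1/2, Young's inequality x^(2p) <= 2p x + (1-2p) shows x^(2p) k(x) < 0.\<close>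
lemma k_negative_small_p:
  assumes "0 < p" "p \<le> 1/2" "0 < x" "x \<le> 1"
  shows "k p x < 0"
proof -
  have e1: "x powr (2*p) * x powr (1-p) = x powr (p+1)"
    and e2: "x powr (2*p) * x powr (1-2*p) = x"
    and e3: "x powr (2*p) * x powr (-2*p) = 1"
    using assms by (simp_all add: powr_add[symmetric])
  have "x powr (2*p) * k p x = x powr (2*p) - (1-p)*(x powr (2*p) * x powr (1-p))
       - (1-p^2)*(x powr (2*p) * x powr (1-2*p)) - (1-p)^2*(x powr (2*p) * x powr (-2*p))"
    unfolding k_def by (simp add: algebra_simps)
  then have scaled: "x powr (2*p) * k p x = x powr (2*p) - (1-p)*x powr (p+1) - (1-p^2)*x - (1-p)^2"
    unfolding e1 e2 e3 by simp
  have young: "x powr (2*p) \<le> 2*p*x + (1-2*p)"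
    using Youngs_inequality_0[of "2*p" "1-2*p" x 1] assms by simp
  have "2*p*x + (1-2*p) - (1-p^2)*x - (1-p)^2 = -(1-x)*p^2 + x*(2*p-1)"
    by (simp add: algebra_simps power2_eq_square)
  moreover have "(1-x)*p^2 \<ge> 0" "x*(2*p-1) \<le> 0" "(1-p)*x powr (p+1) > 0"
    using assms by (auto intro: mult_nonneg_nonpos)
  ultimately have "x powr (2*p) * k p x < 0" using scaled young by linarith
  then show ?thesis using assms by (simp add: mult_less_0_iff)
qed

text \<open>Near 0 the term -(1-p)^2 x^(-2p) dominates k: k(x) < 0 once x^(2p) < (1-p)^2.\<close>
lemma k_negative_near_zero:
  assumes "0 < p" "p < 1" "0 < x" "x powr (2*p) < (1-p)^2"
  shows "k p x < 0"
proof -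
  have "(1-p)^2 * x powr (-2*p) = (1-p)^2 / x powr (2*p)"
    using assms by (simp add: powr_minus divide_inverse)
  also have "\<dots> > 1" using assms by simp
  finally have "(1-p)^2 * x powr (-2*p) > 1" .
  moreover have "(1-p) * x powr (1-p) \<ge> 0" "(1-p^2) * x powr (1-2*p) \<ge> 0"
    using assms power_le_one[of p 2] by auto
  ultimately show ?thesis unfolding k_def by linarith
qed

lemma k_unique_zero:
  assumes "2/3 < p" "p < 1"
  obtains c where "0 < c" "c < 1"
    "\<And>x. 0 < x \<Longrightarrow> x < c \<Longrightarrow> k p x < 0" "\<And>x. c < x \<Longrightarrow> x \<le> 1 \<Longrightarrow> k p x > 0"
proof -
  define x0 where "x0 = ((1-p)/2) powr (1/p)"
  have x0: "0 < x0" "x0 < 1"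
    unfolding x0_def using assms powr_less_mono2[of "1/p" "(1-p)/2" 1] by auto
  have "x0 powr (2*p) = ((1-p)/2)^2"
    unfolding x0_def using assms by (simp add: powr_powr powr_numeral)
  also have "\<dots> < (1-p)^2" using assms by (simp add: power_divide)
  finally have "k p x0 < 0" using k_negative_near_zero assms x0 by auto
  then obtain c where c: "x0 \<le> c" "c \<le> 1" "k p c = 0"
    using IVT'[of "k p" x0 0 1] k_at_one[of p] assms x0 k_continuous_on[OF x0(1)] by auto
  have "0 < c" "c < 1" using c k_at_one[of p] assms x0 by (auto simp: le_less)
  moreover have "k p x < 0" if "0 < x" "x < c" for x
    using k_strictly_increasing[of p x c] c \<open>c < 1\<close> that assms by auto
  moreover have "k p x > 0" if "c < x" "x \<le> 1" for x
    using k_strictly_increasing[of p c x] c \<open>0 < c\<close> that assms by auto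
  ultimately show ?thesis using that by blast
qed

text \<open>Near 0 the term (1-p)^2 x^(-p) dominates w: w(y) > 0 once y^p <= (1-p)^2/4.\<close>
lemma w_positive_near_zero:
  assumes "0 < p" "p < 1" "0 < y" "y < 1" "y powr p \<le> (1-p)^2 / 4"
  shows "w p y > 0"
proof -
  have "(p-1)^2 * y powr (-p) = (1-p)^2 / y powr p"
    by (simp add: powr_minus_divide power2_commute)
  also have "\<dots> \<ge> (1-p)^2 / ((1-p)^2 / 4)"
    using assms by (intro divide_left_mono) auto
  also have "(1-p)^2 / ((1-p)^2 / 4) = 4" using assms by simp
  finally have big: "(p-1)^2 * y powr (-p) \<ge> 4" .
  have "p*(p-1)*y \<ge> p*(p-1)"
    using assms mult_left_mono_neg[of y 1 "p*(p-1)"] by (simp add: mult_nonneg_nonpos)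
  moreover have "p*(p+1) * y powr (1-p) \<le> p*(p+1)"
    using assms powr_le1[of "1-p" y] by (simp add: mult_left_le)
  moreover have "y powr p > 0" using assms by simp
  moreover have "p*(p-1) - (p^2 + 2*p - 2) - p*(p+1) = 2 - 4*p - p^2"
    by (simp add: algebra_simps power2_eq_square)
  moreover have "p^2 < 1" using assms power_strict_mono[of p 1 2] by simp
  ultimately show ?thesis unfolding w_def using big assms by linarith
qed

lemma w_positive_below:
  assumes "0 < p" "p < 1" "0 < c" "c \<le> 1"
  obtains y where "0 < y" "y < c" "w p y > 0"
proof -
  define y where "y = min (c/2) (((1-p)^2/4) powr (1/p))"
  have y: "0 < y" "y < c" using assms unfolding y_def by auto
  have "y powr p \<le> (((1-p)^2/4) powr (1/p)) powr p"
    using y assms unfolding y_def by (intro powr_mono2) auto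
  then have "w p y > 0" using w_positive_near_zero[of p y] y assms by (simp add: powr_powr)
  with y that show ?thesis by blast
qed

lemma sign_change_point_unique:
  fixes f :: "real \<Rightarrow> real"
  assumes "\<And>x. a < x \<Longrightarrow> x < s \<Longrightarrow> f x > 0" "\<And>x. s < x \<Longrightarrow> x < b \<Longrightarrow> f x < 0"
    and "\<And>x. a < x \<Longrightarrow> x < t \<Longrightarrow> f x > 0" "\<And>x. t < x \<Longrightarrow> x < b \<Longrightarrow> f x < 0"
    and "a < s" "s < b" "a < t" "t < b"
  shows "s = t"
proof (rule ccontr)
  assume "s \<noteq> t"
  then have "f ((s+t)/2) > 0 \<and> f ((s+t)/2) < 0"
    using assms by (cases "s < t") (auto simp: not_less)
  then show False by linarith
qed

text \<open>Case (i): for p <= 2/3, k < 0 on (0,1), so w decreases to w(1) = 4 - 6p >= 0.\<close>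
theorem w_positive_small_p:
  assumes "0 < p" "p \<le> 2/3" "0 < x" "x < 1"
  shows "w p x > 0"
proof -
  have "k p y < 0" if "x < y" "y < 1" for y
  proof (cases "p \<le> 1/2")
    case True then show ?thesis using k_negative_small_p[of p y] assms that by auto
  next
    case False then show ?thesis
      using k_strictly_increasing[of p y 1] k_at_one[of p] assms that by auto
  qed
  then have "w p 1 < w p x" using w_decreasing_where_k_negative assms by blast
  then show ?thesis using w_at_one[of p] assms by auto
qed

text \<open>Case (ii): for 2/3 < p < 1, w falls from positive values to w(c) < 0 on (0,c]
  and increases to w(1) < 0 afterwards, so it changes sign exactly once.\<close>
theorem w_single_sign_change:
  assumes p: "2/3 < p" "p < 1"
  shows "\<exists>!x1. 0 < x1 \<and> x1 < 1 \<and> (\<forall>x. 0 < x \<and> x < x1 \<longrightarrow> w p x > 0)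
                \<and> (\<forall>x. x1 < x \<and> x < 1 \<longrightarrow> w p x < 0)"
proof -
  obtain c where c: "0 < c" "c < 1"
    and k_neg: "\<And>x. 0 < x \<Longrightarrow> x < c \<Longrightarrow> k p x < 0"
    and k_pos: "\<And>x. c < x \<Longrightarrow> x \<le> 1 \<Longrightarrow> k p x > 0"
    using k_unique_zero[OF p] by blast
  have w_c: "w p c < 0"
    using w_increasing_where_k_positive[of c 1 p] k_pos c p w_at_one[of p] by auto
  obtain y where y: "0 < y" "y < c" "w p y > 0"
    using w_positive_below[of p c] p c by auto
  then obtain x1 where "y \<le> x1" "x1 \<le> c" "w p x1 = 0"
    using IVT2'[of "w p" c 0 y] w_c y w_continuous_on[OF y(1)] by auto
  with y w_c have x1: "y < x1" "x1 < c" "w p x1 = 0"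
    by (auto simp: le_less)
  have before: "w p x > 0" if "0 < x" "x < x1" for x
    using w_decreasing_where_k_negative[of x x1 p] k_neg x1 p that by auto
  have after: "w p x < 0" if "x1 < x" "x < 1" for x
  proof (cases "x \<le> c")
    case True then show ?thesis
      using w_decreasing_where_k_negative[of x1 x p] k_neg x1 y p that by auto
  next
    case False then show ?thesis
      using w_increasing_where_k_positive[of x 1 p] k_pos w_at_one[of p] p c that by auto
  qed
  have x1_bounds: "0 < x1" "x1 < 1" using x1 y c by auto
  show ?thesis
  proof (rule ex1I[of _ x1])
    fix z
    assume "0 < z \<and> z < 1 \<and> (\<forall>x. 0 < x \<and> x < z \<longrightarrow> w p x > 0)
              \<and> (\<forall>x. z < x \<and> x < 1 \<longrightarrow> w p x < 0)"
    then show "z = x1"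
      using sign_change_point_unique[of 0 z "w p" 1 x1] before after x1_bounds by blast
  qed (use before after x1_bounds in blast)
qed

lemma w_at_p_one: "0 < x \<Longrightarrow> w 1 x = x - 3"
  unfolding w_def by simp

theorem mainTheorem8:
  shows "(\<forall>p::real. 0 < p \<and> p \<le> 2/3 \<longrightarrow> (\<forall>x. 0 < x \<and> x < 1 \<longrightarrow> w p x > 0))
       \<and> (\<forall>p::real. 2/3 < p \<and> p < 1 \<longrightarrow>
            (\<exists>!x1. 0 < x1 \<and> x1 < 1 \<and>
                 (\<forall>x. 0 < x \<and> x < x1 \<longrightarrow> w p x > 0) \<and>
                 (\<forall>x. x1 < x \<and> x < 1 \<longrightarrow> w p x < 0)))
       \<and> (\<forall>x::real. 0 < x \<and> x < 1 \<longrightarrow> w 1 x < 0)"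
  using w_positive_small_p w_single_sign_change w_at_p_one by auto

end
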